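(* Let $(Q,\rightarrow)$ be a finite transition system, $\mathscr{R}$ a preorder on $Q$ and $\mathscr{P}\subseteq\mathscr{R}$ an equivalence relation with a representative $E.\mathrm{rep}\in E$ fixed for each block $E$ of $\mathscr{P}$. Assume there is no $(\mathscr{P},\mathscr{R})$-splitter transition of type 1, and let $E\rightarrow B$ be a $(\mathscr{P},\mathscr{R})$-splitter transition of type 2. Let $P'=\mathrm{Split}(P_{\mathscr{P}},E\cap\rightarrow^{-1}(B))$. Then $\mathscr{P}_{P'}$ is strictly included in $\mathscr{P}$ and contains every $\mathscr{R}$-block-stable equivalence relation included in $\mathscr{P}$.
   Context: A preorder is a reflexive transitive relation; its blocks are $[q]_{\mathscr{R}}=\{q'\mid q\,\mathscr{R}\,q'\wedge q'\,\mathscr{R}\,q\}$. $\mathscr{R}(X)=\{q'\mid\exists q\in X.\ q\,\mathscr{R}\,q'\}$, $\rightarrow^{-1}(Y)=\{q\mid\exists y\in Y.\ q\rightarrow y\}$; for sets, $X\rightarrow Y$ means some $x\in X,y\in Y$ have $x\rightarrow y$, and $X\,\mathscr{R}\,Y$ means $(X\times Y)\cap\mathscr{R}\neq\emptyset$. $P_{\mathscr{P}}$ is the partition into blocks of $\mathscr{P}$; $\mathscr{P}_P=\bigcup_{E\in P}E\times E$. For a block $E$ of $\mathscr{P}$ and a block $B$ of $\mathscr{R}$, $\mathrm{RelCount}_{(\mathscr{P},\mathscr{R})}(E,B)=|\{E'\in P_{\mathscr{P}}\mid E.\mathrm{rep}\rightarrow E'\wedge B\,\mathscr{R}\,E'\}|$.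 A $(\mathscr{P},\mathscr{R})$-splitter transition of type 1 is a pair ($E$ block of $\mathscr{P}$, $B$ block of $\mathscr{R}$) with $E\rightarrow B$ and $\mathrm{RelCount}_{(\mathscr{P},\mathscr{R})}(E,B)=0$. A $(\mathscr{P},\mathscr{R})$-splitter transition of type 2 is a pair ($E$, $B$) with $E.\mathrm{rep}\rightarrow B$, $\mathrm{RelCount}_{(\mathscr{P},\mathscr{R})}(E,B)=|\{[b]_{\mathscr{P}}\subseteq B\mid E.\mathrm{rep}\rightarrow b\}|$, and $E\not\subseteq\rightarrow^{-1}(B)$. $\mathrm{Split}(P,M)$ replaces each block $E$ of $P$ with $E\cap M\neq\emptyset$ and $E\not\subseteq M$ by $E\cap M$ and $E\setminus M$. An equivalence relation $\mathscr{P}''\subseteq\mathscr{R}$ is $\mathscr{R}$-block-stable if for all $b,d,d'$ with $d\,\mathscr{P}''\,d'$: $d\in\rightarrow^{-1}(\mathscr{R}(b))\iff d'\in\rightarrow^{-1}(\mathscr{R}(b))$. *)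

theory Defs
  imports Main
begin

definition rblock :: "('a \<times> 'a) set \<Rightarrow> 'a \<Rightarrow> 'a set" where
  "rblock R q = {q'. (q, q') \<in> R \<and> (q', q) \<in> R}"

definition rblocks :: "'a set \<Rightarrow> ('a \<times> 'a) set \<Rightarrow> 'a set set" where
  "rblocks Q R = {rblock R q | q. q \<in> Q}"

definition pre :: "('a \<times> 'a) set \<Rightarrow> 'a set \<Rightarrow> 'a set" where
  "pre T Y = {q. \<exists>y\<in>Y. (q, y) \<in> T}"

definition set_trans :: "('a \<times> 'a) set \<Rightarrow> 'a set \<Rightarrow> 'a set \<Rightarrow> bool" where
  "set_trans T X Y \<longleftrightarrow> (\<exists>x\<in>X. \<exists>y\<in>Y. (x, y) \<in> T)"

definition set_rel :: "('a \<times> 'a) set \<Rightarrow> 'a set \<Rightarrow> 'a set \<Rightarrow> bool" where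
  "set_rel R X Y \<longleftrightarrow> (X \<times> Y) \<inter> R \<noteq> {}"

definition RelCount :: "'a set \<Rightarrow> ('a \<times> 'a) set \<Rightarrow> ('a \<times> 'a) set \<Rightarrow> ('a \<times> 'a) set
    \<Rightarrow> ('a set \<Rightarrow> 'a) \<Rightarrow> 'a set \<Rightarrow> 'a set \<Rightarrow> nat" where
  "RelCount Q T P R rep E B =
     card {E' \<in> Q // P. set_trans T {rep E} E' \<and> set_rel R B E'}"

definition splitter1 :: "'a set \<Rightarrow> ('a \<times> 'a) set \<Rightarrow> ('a \<times> 'a) set \<Rightarrow> ('a \<times> 'a) set
    \<Rightarrow> ('a set \<Rightarrow> 'a) \<Rightarrow> 'a set \<Rightarrow> 'a set \<Rightarrow> bool" where
  "splitter1 Q T P R rep E B \<longleftrightarrow>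
     E \<in> Q // P \<and> B \<in> rblocks Q R \<and> set_trans T E B \<and> RelCount Q T P R rep E B = 0"

definition splitter2 :: "'a set \<Rightarrow> ('a \<times> 'a) set \<Rightarrow> ('a \<times> 'a) set \<Rightarrow> ('a \<times> 'a) set
    \<Rightarrow> ('a set \<Rightarrow> 'a) \<Rightarrow> 'a set \<Rightarrow> 'a set \<Rightarrow> bool" where
  "splitter2 Q T P R rep E B \<longleftrightarrow>
     E \<in> Q // P \<and> B \<in> rblocks Q R \<and> set_trans T {rep E} B \<and>
     RelCount Q T P R rep E B =
       card {P `` {b} | b. b \<in> Q \<and> P `` {b} \<subseteq> B \<and> (rep E, b) \<in> T} \<and>
     \<not> E \<subseteq> pre T B"

definition Split :: "'a set set \<Rightarrow> 'a set \<Rightarrow> 'a set set" where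
  "Split Part M =
     {E \<in> Part. E \<inter> M = {} \<or> E \<subseteq> M}
     \<union> {E \<inter> M | E. E \<in> Part \<and> E \<inter> M \<noteq> {} \<and> \<not> E \<subseteq> M}
     \<union> {E - M | E. E \<in> Part \<and> E \<inter> M \<noteq> {} \<and> \<not> E \<subseteq> M}"

definition rel_of_part :: "'a set set \<Rightarrow> ('a \<times> 'a) set" where
  "rel_of_part Part = (\<Union>E\<in>Part. E \<times> E)"

(* R-block-stability of a relation P'' (equivalence and inclusion in R are stated separately) *)
definition block_stable :: "('a \<times> 'a) set \<Rightarrow> ('a \<times> 'a) set \<Rightarrow> ('a \<times> 'a) set \<Rightarrow> bool" where
  "block_stable T R P'' \<longleftrightarrow>
     (\<forall>b d d'. (d, d') \<in> P'' \<longrightarrow> (d \<in> pre T (R `` {b}) \<longleftrightarrow> d' \<in> pre T (R `` {b})))"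

end

theory Submission
  imports Defs
begin

text \<open>
  Write \<open>B = [b]\<^sub>R\<close> and \<open>M = E \<inter> \<rightarrow>\<^sup>-\<^sup>1(B)\<close>. Splitting by \<open>M\<close> refines \<open>P\<close>, and strictly so
  because \<open>E.rep \<in> M\<close> while \<open>E \<not>\<subseteq> M\<close>. For maximality it suffices that every stable
  \<open>P'' \<subseteq> P\<close> respects \<open>M\<close>. The type-2 count condition says that every block reached from
  \<open>E.rep\<close> and lying \<open>R\<close>-above \<open>B\<close> is contained in \<open>B\<close>; the absence of type-1 splitters says
  that every successor of a state in \<open>E\<close> lies \<open>R\<close>-below some successor of \<open>E.rep\<close>. Together,
  a state of \<open>E\<close> has a successor in \<open>B\<close> iff it has one in \<open>R(b)\<close>, and membership in
  \<open>\<rightarrow>\<^sup>-\<^sup>1(R(b))\<close> is respected by any block-stable relation.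
\<close>

lemma rel_of_part_Split_subset:
  assumes "equiv Q P"
  shows "rel_of_part (Split (Q // P) M) \<subseteq> P"
proof
  fix p assume "p \<in> rel_of_part (Split (Q // P) M)"
  then obtain X a c where X: "X \<in> Split (Q // P) M" "p = (a, c)" "a \<in> X" "c \<in> X"
    unfolding rel_of_part_def by auto
  then obtain F where "F \<in> Q // P" "X \<subseteq> F"
    unfolding Split_def by auto
  with X assms show "p \<in> P"
    using in_quotient_imp_in_rel by fastforce
qed

lemma rel_of_part_Split_separates:
  assumes "x \<in> M" and "y \<notin> M"
  shows "(x, y) \<notin> rel_of_part (Split Part M)"
  using assms unfolding rel_of_part_def Split_def by auto

lemma Split_memI_inter:
  "F \<in> Part \<Longrightarrow> F \<inter> M \<noteq> {} \<Longrightarrow> \<not> F \<subseteq> M \<Longrightarrow> F \<inter> M \<in> Split Part M"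
  unfolding Split_def by blast

lemma Split_memI_diff:
  "F \<in> Part \<Longrightarrow> F \<inter> M \<noteq> {} \<Longrightarrow> \<not> F \<subseteq> M \<Longrightarrow> F - M \<in> Split Part M"
  unfolding Split_def by blast

lemma Split_keeps_together:
  assumes "F \<in> Part" and "x \<in> F" and "y \<in> F" and "x \<in> M \<longleftrightarrow> y \<in> M"
  shows "\<exists>X \<in> Split Part M. x \<in> X \<and> y \<in> X"
proof (cases "F \<inter> M = {} \<or> F \<subseteq> M")
  case True
  then have "F \<in> Split Part M" using assms(1) by (simp add: Split_def)
  with assms(2,3) show ?thesis by blast
next
  case False
  then have split: "F \<inter> M \<noteq> {}" "\<not> F \<subseteq> M" by simp_all
  show ?thesis
  proof (cases "x \<in> M")
    case True
    with assms(2-4) have "x \<in> F \<inter> M \<and> y \<in> F \<inter> M" by simp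
    then show ?thesis by (rule bexI[OF _ Split_memI_inter[OF assms(1) split]])
  next
    case False
    with assms(2-4) have "x \<in> F - M \<and> y \<in> F - M" by simp
    then show ?thesis by (rule bexI[OF _ Split_memI_diff[OF assms(1) split]])
  qed
qed

lemma subset_rel_of_part_Split:
  assumes "equiv Q P" and "P'' \<subseteq> P"
    and respects: "\<And>d d'. (d, d') \<in> P'' \<Longrightarrow> d \<in> M \<longleftrightarrow> d' \<in> M"
  shows "P'' \<subseteq> rel_of_part (Split (Q // P) M)"
proof safe
  fix d d' assume dd': "(d, d') \<in> P''"
  have "(d, d') \<in> P" using dd' assms(2) by auto
  moreover have "d \<in> Q" using calculation equiv_type[OF assms(1)] by auto
  moreover have "(d, d) \<in> P" using calculation assms(1) by (meson equivE refl_onD)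
  ultimately have "P `` {d} \<in> Q // P" "d \<in> P `` {d}" "d' \<in> P `` {d}"
    by (simp_all add: quotientI)
  from Split_keeps_together[OF this respects[OF dd']]
  show "(d, d') \<in> rel_of_part (Split (Q // P) M)"
    unfolding rel_of_part_def by blast
qed

lemma splitter2_related_block_subset:
  assumes "finite Q" and "refl_on Q R" and "equiv Q P"
    and "splitter2 Q T P R rep E B"
    and "E' \<in> Q // P" and "set_trans T {rep E} E'" and "set_rel R B E'"
  shows "E' \<subseteq> B"
proof -
  define Related where
    "Related = {E' \<in> Q // P. set_trans T {rep E} E' \<and> set_rel R B E'}"
  define Inside where
    "Inside = {P `` {b} | b. b \<in> Q \<and> P `` {b} \<subseteq> B \<and> (rep E, b) \<in> T}"
  have "Inside \<subseteq> Related"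
  proof
    fix X assume "X \<in> Inside"
    then obtain b where X: "X = P `` {b}" "b \<in> Q" "X \<subseteq> B" "(rep E, b) \<in> T"
      unfolding Inside_def by auto
    have "b \<in> X" using X assms(3) equiv_class_self by metis
    moreover have "(b, b) \<in> R" using assms(2) X(2) by (simp add: refl_onD)
    ultimately show "X \<in> Related"
      unfolding Related_def set_trans_def set_rel_def using X by (auto intro: quotientI)
  qed
  moreover have "finite Related"
    unfolding Related_def using finite_quotient[OF assms(1) equiv_type[OF assms(3)]] by simp
  moreover have "card Related = card Inside"
    using assms(4) unfolding splitter2_def RelCount_def Related_def Inside_def by simp
  ultimately have "Related = Inside" by (metis card_subset_eq)
  moreover have "E' \<in> Related" unfolding Related_def using assms(5-7) by simp
  ultimately show ?thesis unfolding Inside_def by auto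
qed

lemma no_splitter1_successor_below_rep_successor:
  assumes "T \<subseteq> Q \<times> Q" and "refl_on Q R" and "trans R" and "equiv Q P" and "P \<subseteq> R"
    and "\<not> (\<exists>E' B'. splitter1 Q T P R rep E' B')"
    and "E \<in> Q // P" and "d \<in> E" and "(d, s) \<in> T"
  shows "\<exists>e'. (rep E, e') \<in> T \<and> (s, e') \<in> R"
proof -
  have sQ: "s \<in> Q" using assms(1,9) by auto
  have "(s, s) \<in> R" using assms(2) sQ by (simp add: refl_onD)
  then have "set_trans T E (rblock R s)"
    unfolding set_trans_def rblock_def using assms(8,9) by blast
  moreover have "rblock R s \<in> rblocks Q R" unfolding rblocks_def using sQ by auto
  ultimately have "RelCount Q T P R rep E (rblock R s) \<noteq> 0"
    using assms(6,7) unfolding splitter1_def by metis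
  then obtain E'' where E'': "E'' \<in> Q // P" "set_trans T {rep E} E''"
      "set_rel R (rblock R s) E''"
    unfolding RelCount_def by (metis (no_types, lifting) card.empty empty_Collect_eq)
  obtain e' where e': "e' \<in> E''" "(rep E, e') \<in> T"
    using E''(2) unfolding set_trans_def by auto
  obtain x e where xe: "x \<in> rblock R s" "e \<in> E''" "(x, e) \<in> R"
    using E''(3) unfolding set_rel_def by auto
  have "(e, e') \<in> R" using assms(4,5) E''(1) xe(2) e'(1) in_quotient_imp_in_rel by fastforce
  moreover have "(s, x) \<in> R" using xe(1) unfolding rblock_def by auto
  ultimately have "(s, e') \<in> R" using xe(3) assms(3) by (meson transD)
  with e' show ?thesis by blast
qed

lemma splitter2_pre_rblock_eq_pre_upset:
  assumes "finite Q" and "T \<subseteq> Q \<times> Q" and "refl_on Q R" and "trans R"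
    and "equiv Q P" and "P \<subseteq> R"
    and "\<not> (\<exists>E' B'. splitter1 Q T P R rep E' B')"
    and "splitter2 Q T P R rep E B" and "B = rblock R b" and "b \<in> Q"
  shows "E \<inter> pre T B = E \<inter> pre T (R `` {b})"
proof -
  have EQ: "E \<in> Q // P" using assms(8) unfolding splitter2_def by simp
  have "s \<in> B" if d: "d \<in> E" "(d, s) \<in> T" and bs: "(b, s) \<in> R" for d s
  proof -
    obtain e' where e': "(rep E, e') \<in> T" "(s, e') \<in> R"
      using no_splitter1_successor_below_rep_successor[OF assms(2-7) EQ d] by blast
    have e'Q: "e' \<in> Q" using e'(1) assms(2) by auto
    have "b \<in> B" using assms(3,9,10) unfolding rblock_def by (simp add: refl_onD)
    moreover have "(b, e') \<in> R" using bs e'(2) assms(4) by (meson transD)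
    moreover have "e' \<in> P `` {e'}" using assms(5) e'Q by (rule equiv_class_self)
    ultimately have "P `` {e'} \<subseteq> B"
      using splitter2_related_block_subset[OF assms(1,3,5,8)] e'(1) e'Q
      unfolding set_trans_def set_rel_def by (blast intro: quotientI)
    then have "(e', b) \<in> R"
      using \<open>e' \<in> P `` {e'}\<close> assms(9) unfolding rblock_def by auto
    then have "(s, b) \<in> R" using e'(2) assms(4) by (meson transD)
    with bs show "s \<in> B" using assms(9) unfolding rblock_def by auto
  qed
  moreover have "B \<subseteq> R `` {b}" using assms(9) unfolding rblock_def by auto
  ultimately show ?thesis unfolding pre_def by auto
qed

theorem lemma6:
  fixes Q :: "'a set" and T R P :: "('a \<times> 'a) set" and rep :: "'a set \<Rightarrow> 'a"
    and E B :: "'a set"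
  assumes "finite Q" and "T \<subseteq> Q \<times> Q"
    and "R \<subseteq> Q \<times> Q" and "refl_on Q R" and "trans R"
    and "equiv Q P" and "P \<subseteq> R"
    and "\<forall>C \<in> Q // P. rep C \<in> C"
    and "\<not> (\<exists>E' B'. splitter1 Q T P R rep E' B')"
    and "splitter2 Q T P R rep E B"
  shows "rel_of_part (Split (Q // P) (E \<inter> pre T B)) \<subset> P \<and>
         (\<forall>P''. equiv Q P'' \<and> P'' \<subseteq> P \<and> block_stable T R P''
                 \<longrightarrow> P'' \<subseteq> rel_of_part (Split (Q // P) (E \<inter> pre T B)))"
proof -
  define M where "M = E \<inter> pre T B"
  have EQ: "E \<in> Q // P" and "B \<in> rblocks Q R" and "set_trans T {rep E} B"
    and "\<not> E \<subseteq> pre T B"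
    using assms(10) unfolding splitter2_def by auto
  obtain b where b: "b \<in> Q" "B = rblock R b"
    using \<open>B \<in> rblocks Q R\<close> unfolding rblocks_def by auto
  obtain y where y: "y \<in> E" "y \<notin> M" using \<open>\<not> E \<subseteq> pre T B\<close> unfolding M_def by auto
  have repE: "rep E \<in> E" using assms(8) EQ by blast
  then have "rep E \<in> M"
    using \<open>set_trans T {rep E} B\<close> unfolding M_def pre_def set_trans_def by blast
  then have "(rep E, y) \<notin> rel_of_part (Split (Q // P) M)"
    using y(2) by (rule rel_of_part_Split_separates)
  moreover have "(rep E, y) \<in> P"
    by (rule in_quotient_imp_in_rel[OF assms(6) EQ]) (simp add: repE y(1))
  ultimately have strict: "rel_of_part (Split (Q // P) M) \<subset> P"
    using rel_of_part_Split_subset[OF assms(6)] by blast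
  have M_eq: "M = E \<inter> pre T (R `` {b})"
    unfolding M_def using splitter2_pre_rblock_eq_pre_upset[OF assms(1,2,4-7,9,10) b(2,1)] .
  have symP: "sym P" using assms(6) by (simp add: equiv_def)
  have maximal: "P'' \<subseteq> rel_of_part (Split (Q // P) M)"
    if "P'' \<subseteq> P" "block_stable T R P''" for P''
  proof (rule subset_rel_of_part_Split[OF assms(6) that(1)])
    fix d d' assume dd': "(d, d') \<in> P''"
    then have "(d, d') \<in> P" "(d', d) \<in> P" using that(1) symP by (auto dest: symD)
    then have "d \<in> E \<longleftrightarrow> d' \<in> E"
      using in_quotient_imp_closed[OF assms(6) EQ] by blast
    moreover have "d \<in> pre T (R `` {b}) \<longleftrightarrow> d' \<in> pre T (R `` {b})"
      using that(2) dd' unfolding block_stable_def by blast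
    ultimately show "d \<in> M \<longleftrightarrow> d' \<in> M" unfolding M_eq by blast
  qed
  show ?thesis
    using strict maximal unfolding M_def by blast
qed

end
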